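(* Let $L$ be a parabolic operator with merely bounded coefficients, $\Omega\subseteq\mathbb{R}^{n+1}$ open, $\mathbf{x}_0\in\partial_e\Omega\setminus\{\infty\}$ and $R>0$. Assume there exist $\gamma,\eta>0$ such that for every $\mathbf{x}\in\partial_e\Omega$ and $r>0$ with $\mathbf{Q}_r(\mathbf{x})\subseteq\mathbf{Q}_{3R}(\mathbf{x}_0)$: every function $v$ with $v\ge0$ in $\mathbf{Q}_r(\mathbf{x})\cap\Omega$, $Lv=0$ weakly in $\mathbf{Q}_r(\mathbf{x})\cap\Omega$, and $v=1$ continuously on $\mathbf{Q}_r(\mathbf{x})\cap\partial_e\Omega$ satisfies $v(\mathbf{Y})\ge\eta$ for all $\mathbf{Y}\in\mathbf{Q}_{\gamma r}(\mathbf{x})\cap\Omega$. Then there exist $C,\alpha_H>0$, depending only on $\eta$, $\gamma$ and $n$, such that every function $u$ with $u\ge0$ in $\mathbf{Q}_{3R}(\mathbf{x}_0)\cap\Omega$, $Lu=0$ weakly in $\mathbf{Q}_{3R}(\mathbf{x}_0)\cap\Omega$, and $u=0$ continuously on $\mathbf{Q}_{3R}(\mathbf{x}_0)\cap\partial_e\Omega$ satisfies $$u(\mathbf{Y})\le C\left(\frac{\delta(\mathbf{Y})}{R}\right)^{\alpha_H}\sup_{\mathbf{Q}_{3R}(\mathbf{x}_0)\cap\Omega}u\qquad\text{for all }\mathbf{Y}\in\mathbf{Q}_R(\mathbf{x}_0)\cap\Omega.$$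
   Context: Points of $\mathbb{R}^{n+1}=\mathbb{R}^n\times\mathbb{R}$ written in boldface; parabolic norm $\|(X,t)\|=\max\{|X|,|t|^{1/2}\}$; $\mathbf{Q}_r(\mathbf{X})=\{\mathbf{Y}:\|\mathbf{X}-\mathbf{Y}\|<r\}$, $\mathbf{Q}_r^{\mp}(X,t)=\mathbf{Q}_r(X,t)\cap\{s\lessgtr t\}$. Operators: $L=\partial_t-\operatorname{div}_X(A\nabla_X)$, $A$ real measurable (not necessarily symmetric) $n\times n$, $\lambda|\xi|^2\le A\xi\cdot\xi$, $\|A\|_{L^\infty}\le\lambda^{-1}$; a weak solution of $Lu=0$ in open $U$ is $u\in W^{1,2}_{loc}(U)$ with $\iint_U(-u\partial_t\psi+A\nabla_Xu\cdot\nabla_X\psi)=0$ for $\psi\in C_c^\infty(U)$. Boundary: $\mathcal{P}\Omega=\{(x,t)\in\partial\Omega:\mathbf{Q}^-_r(x,t)\cap\Omega^c\ne\emptyset\ \forall r\}$; $\partial_a\Omega=\partial\Omega\setminus\mathcal{P}\Omega$; $\partial_s\Omega=\{(x,t)\in\partial_a\Omega:\exists r,\mathbf{Q}_r^+(x,t)\cap\Omega=\emptyset\}$; $\partial_{ss}\Omega=\partial_a\Omega\setminus\partial_s\Omega$; $\partial_n\Omega=\mathcal{P}\Omega$ (bounded) or $\mathcal{P}\Omega\cup\{\infty\}$ (unbounded); $\partial_e\Omega=\partial_n\Omega\cup\partial_{ss}\Omega$. $\delta(\mathbf{Y})=\operatorname{dist}(\mathbf{Y},\partial_e\Omega)$ in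 the parabolic distance. *)

theory Defs
  imports "HOL-Analysis.Analysis"
begin

text \<open>Points of R^(n+1) = R^n x R, with the spatial dimension n given by the finite type 'n.\<close>
type_synonym 'n pt = "(real^'n) \<times> real"

definition pdist :: "('n::finite) pt \<Rightarrow> ('n::finite) pt \<Rightarrow> real" where
  "pdist p q = max (norm (fst p - fst q)) (sqrt \<bar>snd p - snd q\<bar>)"

definition pcyl :: "real \<Rightarrow> ('n::finite) pt \<Rightarrow> ('n::finite) pt set" where
  "pcyl r x = {y. pdist x y < r}"

definition pcyl_minus :: "real \<Rightarrow> ('n::finite) pt \<Rightarrow> ('n::finite) pt set" where
  "pcyl_minus r x = pcyl r x \<inter> {y. snd y < snd x}"

definition pcyl_plus :: "real \<Rightarrow> ('n::finite) pt \<Rightarrow> ('n::finite) pt set" where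
  "pcyl_plus r x = pcyl r x \<inter> {y. snd y > snd x}"

definition par_bdry :: "('n::finite) pt set \<Rightarrow> ('n::finite) pt set" where
  "par_bdry \<Omega> = {z \<in> frontier \<Omega>. \<forall>r>0. pcyl_minus r z \<inter> - \<Omega> \<noteq> {}}"

definition abn_bdry :: "('n::finite) pt set \<Rightarrow> ('n::finite) pt set" where
  "abn_bdry \<Omega> = frontier \<Omega> - par_bdry \<Omega>"

definition sing_bdry :: "('n::finite) pt set \<Rightarrow> ('n::finite) pt set" where
  "sing_bdry \<Omega> = {z \<in> abn_bdry \<Omega>. \<exists>r>0. pcyl_plus r z \<inter> \<Omega> = {}}"

definition ssing_bdry :: "('n::finite) pt set \<Rightarrow> ('n::finite) pt set" where
  "ssing_bdry \<Omega> = abn_bdry \<Omega> - sing_bdry \<Omega>"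

text \<open>Finite part of the essential boundary: (partial_e Omega) minus the point at infinity.\<close>
definition ess_bdry :: "('n::finite) pt set \<Rightarrow> ('n::finite) pt set" where
  "ess_bdry \<Omega> = par_bdry \<Omega> \<union> ssing_bdry \<Omega>"

text \<open>delta(Y): parabolic distance to the essential boundary (the point at infinity is at
  infinite distance and does not contribute).\<close>
definition pdelta :: "('n::finite) pt set \<Rightarrow> ('n::finite) pt \<Rightarrow> real" where
  "pdelta \<Omega> y = Inf {pdist y z | z. z \<in> ess_bdry \<Omega>}"

primrec Ck :: "nat \<Rightarrow> ('a::euclidean_space \<Rightarrow> real) \<Rightarrow> bool" where
  "Ck 0 f = continuous_on UNIV f"
| "Ck (Suc k) f = ((\<forall>p. f differentiable (at p)) \<and>
                    (\<forall>v. Ck k (\<lambda>p. frechet_derivative f (at p) v)))"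

definition smooth_fun :: "('a::euclidean_space \<Rightarrow> real) \<Rightarrow> bool" where
  "smooth_fun f = (\<forall>k. Ck k f)"

definition test_fun :: "'a::euclidean_space set \<Rightarrow> ('a \<Rightarrow> real) \<Rightarrow> bool" where
  "test_fun U \<psi> = (smooth_fun \<psi> \<and> compact (closure {p. \<psi> p \<noteq> 0}) \<and>
                    closure {p. \<psi> p \<noteq> 0} \<subseteq> U)"

definition dX :: "(('n::finite) pt \<Rightarrow> real) \<Rightarrow> ('n::finite) pt \<Rightarrow> 'n \<Rightarrow> real" where
  "dX \<psi> p i = frechet_derivative \<psi> (at p) (axis i 1, 0)"

definition gradX :: "(('n::finite) pt \<Rightarrow> real) \<Rightarrow> ('n::finite) pt \<Rightarrow> real^'n" where
  "gradX \<psi> p = (\<chi> i. dX \<psi> p i)"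

definition dT :: "(('n::finite) pt \<Rightarrow> real) \<Rightarrow> ('n::finite) pt \<Rightarrow> real" where
  "dT \<psi> p = frechet_derivative \<psi> (at p) (0, 1)"

definition coeff_ok :: "real \<Rightarrow> (('n::finite) pt \<Rightarrow> real^('n::finite)^'n) \<Rightarrow> bool" where
  "coeff_ok lam A = (lam > 0 \<and>
     (\<forall>i j. (\<lambda>p. A p $ i $ j) \<in> borel_measurable lborel) \<and>
     (\<forall>p \<xi>. lam * (norm \<xi>)\<^sup>2 \<le> (A p *v \<xi>) \<bullet> \<xi>) \<and>
     (\<forall>p. onorm (\<lambda>\<xi>. A p *v \<xi>) \<le> 1 / lam))"

text \<open>Weak solutions of L u = du/dt - div_X (A grad_X u) = 0 in U:
  u in W^{1,2}_loc(U) (u and its weak spatial gradient g locally square integrable) and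
  the integral identity against all test functions.\<close>
definition weak_sol :: "(('n::finite) pt \<Rightarrow> real^('n::finite)^'n) \<Rightarrow> ('n::finite) pt set \<Rightarrow> (('n::finite) pt \<Rightarrow> real) \<Rightarrow> bool" where
  "weak_sol A U u = (
     set_borel_measurable lborel U u \<and>
     (\<forall>K. compact K \<and> K \<subseteq> U \<longrightarrow> set_integrable lborel K (\<lambda>p. (u p)\<^sup>2)) \<and>
     (\<exists>g :: ('n::finite) pt \<Rightarrow> real^'n.
        (\<forall>i. set_borel_measurable lborel U (\<lambda>p. g p $ i)) \<and>
        (\<forall>K. compact K \<and> K \<subseteq> U \<longrightarrow> set_integrable lborel K (\<lambda>p. (norm (g p))\<^sup>2)) \<and>
        (\<forall>\<psi> i. test_fun U \<psi> \<longrightarrow>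
            (LINT p:U|lborel. u p * dX \<psi> p i) = - (LINT p:U|lborel. g p $ i * \<psi> p)) \<and>
        (\<forall>\<psi>. test_fun U \<psi> \<longrightarrow>
            (LINT p:U|lborel. - u p * dT \<psi> p + (A p *v g p) \<bullet> gradX \<psi> p) = 0)))"

end

theory Submission
  imports Defs
begin

(* If u <= m on Q_r(x) \<inter> \<Omega> for a point x of the essential boundary, then v = 1 - u/m is a
  nonnegative weak solution in Q_r(x) \<inter> \<Omega> with boundary value 1, so the hypothesis gives
  v >= eta, i.e. u <= (1 - eta) m, on Q_(gamma r)(x). Iterating from Q_R(z) yields
  u <= (1 - eta)^k sup u = (gamma^k)^alpha sup u on Q_(gamma^k R)(z), alpha = log (1 - eta) / log gamma,
  which is Hoelder decay at the boundary; it is applied at a boundary point z with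
  d(Y, z) < 2 delta(Y), whence C = (2 / gamma)^alpha. The only analytic input is that weak
  solutions stay weak solutions under restriction to open subsets and under affine maps
  u |-> a + b u, and the latter comes down to the vanishing of the integral of a derivative of a
  test function, proved with difference quotients and dominated convergence. *)

section \<open>Test functions\<close>

lemma smooth_fun_C1:
  assumes "smooth_fun \<psi>"
  shows smooth_fun_continuous: "continuous_on UNIV \<psi>"
    and smooth_fun_has_derivative: "(\<psi> has_derivative frechet_derivative \<psi> (at p)) (at p)"
    and smooth_fun_continuous_derivative:
      "continuous_on UNIV (\<lambda>p. frechet_derivative \<psi> (at p) w)"
proof -
  have "Ck 0 \<psi>" "Ck (Suc 0) \<psi>" using assms unfolding smooth_fun_def by blast+
  then show "continuous_on UNIV \<psi>"
    and "(\<psi> has_derivative frechet_derivative \<psi> (at p)) (at p)"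
    and "continuous_on UNIV (\<lambda>p. frechet_derivative \<psi> (at p) w)"
    using frechet_derivative_works by auto
qed

lemma frechet_derivative_eq_0_outside_support:
  assumes "smooth_fun \<psi>" "p \<notin> closure {p. \<psi> p \<noteq> 0}"
  shows "frechet_derivative \<psi> (at p) w = 0"
proof -
  have "((\<lambda>_. 0) has_derivative (\<lambda>_. 0)) (at p)" by simp
  then have "(\<psi> has_derivative (\<lambda>_. 0)) (at p)"
    by (rule has_derivative_transform_within_open[where s="- closure {p. \<psi> p \<noteq> 0}"])
       (use assms(2) closure_subset[of "{p. \<psi> p \<noteq> 0}"] in auto)
  then have "(\<lambda>_. 0) = frechet_derivative \<psi> (at p)"
    by (rule frechet_derivative_at)
  then show ?thesis by metis
qed

lemma smooth_fun_has_field_derivative_line: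
  assumes "smooth_fun (\<psi> :: 'a::euclidean_space \<Rightarrow> real)"
  shows "((\<lambda>s. \<psi> (p + s *\<^sub>R w)) has_field_derivative frechet_derivative \<psi> (at (p + s *\<^sub>R w)) w) (at s)"
proof -
  let ?D = "frechet_derivative \<psi> (at (p + s *\<^sub>R w))"
  have D: "(\<psi> has_derivative ?D) (at (p + s *\<^sub>R w))"
    using smooth_fun_has_derivative[OF assms] .
  have "((\<lambda>s. p + s *\<^sub>R w) has_derivative (\<lambda>d. d *\<^sub>R w)) (at s)"
    by (auto intro!: derivative_eq_intros)
  from has_derivative_compose[OF this D]
  have "((\<lambda>s. \<psi> (p + s *\<^sub>R w)) has_derivative (\<lambda>d. ?D (d *\<^sub>R w))) (at s)" .
  moreover have "linear ?D" using D has_derivative_linear by blast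
  ultimately show ?thesis
    unfolding has_field_derivative_def by (simp add: linear_scale mult_commute_abs)
qed

lemma integrable_continuous_vanishing_outside_compact:
  fixes f :: "'a::euclidean_space \<Rightarrow> real"
  assumes "continuous_on UNIV f" "compact S" "\<And>p. p \<notin> S \<Longrightarrow> f p = 0"
  shows "integrable lborel f"
proof -
  have "f = (\<lambda>p. indicator S p *\<^sub>R f p)"
    using assms(3) by (auto simp: indicator_def fun_eq_iff)
  then show ?thesis
    using borel_integrable_compact[OF assms(2) continuous_on_subset[OF assms(1)]] by simp
qed

lemma lborel_integral_translate:
  fixes f :: "'a::euclidean_space \<Rightarrow> real"
  assumes "integrable lborel f"
  shows "integrable lborel (\<lambda>p. f (p + c))" "integral\<^sup>L lborel (\<lambda>p. f (p + c)) = integral\<^sup>L lborel f"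
proof -
  have m: "(+) c \<in> measurable lborel borel" and fm: "f \<in> borel_measurable borel"
    using borel_measurable_integrable[OF assms] by auto
  have "integrable (distr lborel borel ((+) c)) f"
    using assms by (simp add: lborel_distr_plus)
  then show "integrable lborel (\<lambda>p. f (p + c))"
    using integrable_distr_eq[OF m fm] by (simp add: add.commute)
  show "integral\<^sup>L lborel (\<lambda>p. f (p + c)) = integral\<^sup>L lborel f"
    using integral_distr[OF m fm] by (simp add: lborel_distr_plus add.commute)
qed

lemma integral_difference_quotient_eq_0:
  fixes f :: "'a::euclidean_space \<Rightarrow> real"
  assumes "integrable lborel f"
  shows "integral\<^sup>L lborel (\<lambda>p. (f (p + h *\<^sub>R w) - f p) / h) = 0"
proof -
  note translate = lborel_integral_translate[OF assms, of "h *\<^sub>R w"]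
  have "integral\<^sup>L lborel (\<lambda>p. (f (p + h *\<^sub>R w) - f p) / h)
      = integral\<^sup>L lborel (\<lambda>p. f (p + h *\<^sub>R w) - f p) / h"
    by (rule integral_divide_zero)
  also have "\<dots> = 0"
    using Bochner_Integration.integral_diff[OF translate(1) assms] translate(2) by simp
  finally show ?thesis .
qed

lemma difference_quotient_dominated:
  fixes \<psi> :: "'a::euclidean_space \<Rightarrow> real"
  assumes sm: "smooth_fun \<psi>" and cpt: "compact (closure {p. \<psi> p \<noteq> 0})"
  obtains B K where "compact K"
    "\<And>h p. 0 < h \<Longrightarrow> h \<le> 1 \<Longrightarrow> \<bar>(\<psi> (p + h *\<^sub>R w) - \<psi> p) / h\<bar> \<le> B * indicator K p"
proof -
  define S where "S = closure {p. \<psi> p \<noteq> 0}"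
  define D where "D = (\<lambda>p. frechet_derivative \<psi> (at p) w)"
  define K where "K = (\<lambda>z. fst z - snd z *\<^sub>R w) ` (S \<times> {0..(1::real)})"
  have \<psi>_zero: "\<psi> p = 0" if "p \<notin> S" for p
    using that closure_subset[of "{p. \<psi> p \<noteq> 0}"] unfolding S_def by auto
  have "compact (D ` S)"
    using cpt smooth_fun_continuous_derivative[OF sm] unfolding S_def D_def
    by (intro compact_continuous_image) (auto intro: continuous_on_subset)
  then obtain B0 where B0: "\<forall>x\<in>D ` S. norm x \<le> B0"
    using compact_imp_bounded bounded_iff by metis
  define B where "B = max B0 0"
  have B_nonneg: "0 \<le> B" unfolding B_def by simp
  have B: "\<bar>D p\<bar> \<le> B" for p
    using B0 frechet_derivative_eq_0_outside_support[OF sm, of p w] unfolding B_def D_def S_def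
    by (cases "p \<in> closure {p. \<psi> p \<noteq> 0}") fastforce+
  have "compact K" unfolding K_def using cpt unfolding S_def
    by (intro compact_continuous_image) (auto intro!: continuous_intros compact_Times)
  moreover have "\<bar>(\<psi> (p + h *\<^sub>R w) - \<psi> p) / h\<bar> \<le> B * indicator K p"
    if h: "0 < h" "h \<le> 1" for h p
  proof (cases "\<psi> (p + h *\<^sub>R w) = 0 \<and> \<psi> p = 0")
    case True
    then show ?thesis using B_nonneg by simp
  next
    case False
    then have "p + h *\<^sub>R w \<in> S \<or> p \<in> S" using \<psi>_zero by blast
    then have "p \<in> K"
      unfolding K_def using h by (force intro: rev_image_eqI[of "(p + h *\<^sub>R w, h)"] rev_image_eqI[of "(p, 0)"])
    obtain t where "\<psi> (p + h *\<^sub>R w) - \<psi> (p + 0 *\<^sub>R w) = (h - 0) * D (p + t *\<^sub>R w)"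
      using MVT2[of 0 h "\<lambda>s. \<psi> (p + s *\<^sub>R w)" "\<lambda>s. D (p + s *\<^sub>R w)"] h
        smooth_fun_has_field_derivative_line[OF sm] unfolding D_def by blast
    then have "(\<psi> (p + h *\<^sub>R w) - \<psi> p) / h = D (p + t *\<^sub>R w)" using h by simp
    then show ?thesis using B \<open>p \<in> K\<close> by simp
  qed
  ultimately show ?thesis using that by blast
qed

lemma integral_frechet_derivative_eq_0:
  fixes \<psi> :: "'a::euclidean_space \<Rightarrow> real"
  assumes sm: "smooth_fun \<psi>" and cpt: "compact (closure {p. \<psi> p \<noteq> 0})"
  shows "integrable lborel (\<lambda>p. frechet_derivative \<psi> (at p) w)"
    and "integral\<^sup>L lborel (\<lambda>p. frechet_derivative \<psi> (at p) w) = 0"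
proof -
  define D where "D = (\<lambda>p. frechet_derivative \<psi> (at p) w)"
  have D_cont: "continuous_on UNIV D"
    unfolding D_def by (rule smooth_fun_continuous_derivative[OF sm])
  show "integrable lborel (\<lambda>p. frechet_derivative \<psi> (at p) w)"
    by (rule integrable_continuous_vanishing_outside_compact[OF D_cont[unfolded D_def] cpt])
       (rule frechet_derivative_eq_0_outside_support[OF sm])
  have int_\<psi>: "integrable lborel \<psi>"
    by (rule integrable_continuous_vanishing_outside_compact[OF smooth_fun_continuous[OF sm] cpt])
       (use closure_subset[of "{p. \<psi> p \<noteq> 0}"] in auto)
  obtain B K where K: "compact K" and bound:
    "\<And>h p. 0 < h \<Longrightarrow> h \<le> 1 \<Longrightarrow> \<bar>(\<psi> (p + h *\<^sub>R w) - \<psi> p) / h\<bar> \<le> B * indicator K p"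
    using difference_quotient_dominated[OF sm cpt, of w] by metis
  define h where "h = (\<lambda>k::nat. 1 / real (Suc k))"
  have h: "0 < h k" "h k \<le> 1" for k unfolding h_def by auto
  define q where "q = (\<lambda>k p. (\<psi> (p + h k *\<^sub>R w) - \<psi> p) / h k)"
  have "integral\<^sup>L lborel (q k) = 0" for k
    unfolding q_def by (rule integral_difference_quotient_eq_0[OF int_\<psi>])
  moreover have "(\<lambda>k. integral\<^sup>L lborel (q k)) \<longlonglongrightarrow> integral\<^sup>L lborel D"
  proof (rule integral_dominated_convergence[where w="\<lambda>p. B * indicator K p"])
    have "filterlim h (at 0) sequentially"
      by (rule filterlim_atI) (use LIMSEQ_inverse_real_of_nat h(1) in \<open>auto simp: h_def divide_inverse\<close>)
    moreover have "((\<lambda>s. (\<psi> (p + s *\<^sub>R w) - \<psi> p) / s) \<longlongrightarrow> D p) (at 0)" for p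
      using smooth_fun_has_field_derivative_line[OF sm, of p w 0]
      unfolding has_field_derivative_iff D_def by simp
    ultimately have "(\<lambda>k. q k p) \<longlonglongrightarrow> D p" for p
      unfolding q_def by (rule filterlim_compose[rotated])
    then show "AE p in lborel. (\<lambda>k. q k p) \<longlonglongrightarrow> D p" by simp
    show "AE p in lborel. norm (q k p) \<le> B * indicator K p" for k
      using bound[OF h] unfolding q_def by simp
    show "integrable lborel (\<lambda>p. B * indicator K p)"
      using borel_integrable_compact[OF K continuous_on_const[of K B]] by (simp add: mult.commute)
    have q_cont: "continuous_on UNIV (q k)" for k
      using h(1)[of k] unfolding q_def
      by (auto intro!: continuous_intros continuous_on_compose2[OF smooth_fun_continuous[OF sm]])
    show "q k \<in> borel_measurable lborel" for k
      using borel_measurable_continuous_onI[OF q_cont] by simp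
    show "D \<in> borel_measurable lborel"
      using borel_measurable_continuous_onI[OF D_cont] by simp
  qed
  ultimately show "integral\<^sup>L lborel (\<lambda>p. frechet_derivative \<psi> (at p) w) = 0"
    by (simp add: LIMSEQ_const_iff D_def)
qed

lemma test_fun_subset: "test_fun U \<psi> \<Longrightarrow> U \<subseteq> U' \<Longrightarrow> test_fun U' \<psi>"
  unfolding test_fun_def by blast

lemma test_fun_vanishes_outside:
  assumes "test_fun U \<psi>" "p \<notin> U"
  shows "\<psi> p = 0" "dX \<psi> p i = 0" "dT \<psi> p = 0" "gradX \<psi> p = 0"
proof -
  have sm: "smooth_fun \<psi>" and p: "p \<notin> closure {p. \<psi> p \<noteq> 0}"
    using assms unfolding test_fun_def by auto
  then show "\<psi> p = 0" using closure_subset[of "{p. \<psi> p \<noteq> 0}"] by auto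
  show "dX \<psi> p i = 0" "dT \<psi> p = 0" "gradX \<psi> p = 0"
    unfolding dX_def dT_def gradX_def
    using frechet_derivative_eq_0_outside_support[OF sm p] by (simp_all add: vec_eq_iff)
qed

lemma test_fun_integral_derivatives:
  assumes "test_fun U \<psi>"
  shows "integrable lborel (\<lambda>p. dX \<psi> p i)" "integral\<^sup>L lborel (\<lambda>p. dX \<psi> p i) = 0"
    and "integrable lborel (dT \<psi>)" "integral\<^sup>L lborel (dT \<psi>) = 0"
  using assms integral_frechet_derivative_eq_0 unfolding test_fun_def dX_def dT_def by auto

lemma set_integral_eq_integral_vanishing_outside:
  assumes "\<And>p. p \<notin> U \<Longrightarrow> f p = 0"
  shows "set_lebesgue_integral M U f = integral\<^sup>L M f"
  unfolding set_lebesgue_integral_def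
  by (rule arg_cong[where f="integral\<^sup>L M"]) (use assms in \<open>auto simp: indicator_def\<close>)

lemma integral_add_mult_of_integral_eq_0:
  fixes h f :: "'a \<Rightarrow> real"
  assumes "integrable M h" "integral\<^sup>L M h = 0"
  shows "integral\<^sup>L M (\<lambda>x. h x + c * f x) = c * integral\<^sup>L M f"
proof (cases "integrable M f \<or> c = 0")
  case True
  then show ?thesis using assms by auto
next
  case False
  have "\<not> integrable M (\<lambda>x. h x + c * f x)"
  proof
    assume "integrable M (\<lambda>x. h x + c * f x)"
    then have "integrable M (\<lambda>x. (1 / c) * ((h x + c * f x) - h x))"
      using assms(1) by (intro integrable_mult_right Bochner_Integration.integrable_diff)
    also have "(\<lambda>x. (1 / c) * ((h x + c * f x) - h x)) = f"
      using False by (simp add: fun_eq_iff)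
    finally show False using False by simp
  qed
  then show ?thesis using False by (simp add: not_integrable_integral_eq)
qed

lemma set_integral_add_mult_of_integral_eq_0:
  fixes h f :: "'a \<Rightarrow> real"
  assumes "integrable M h" "integral\<^sup>L M h = 0"
    and "\<And>p. p \<notin> U \<Longrightarrow> h p = 0" "\<And>p. p \<notin> U \<Longrightarrow> f p = 0"
  shows "(LINT p:U|M. h p + c * f p) = c * (LINT p:U|M. f p)"
  using integral_add_mult_of_integral_eq_0[OF assms(1,2)] assms(3,4)
  by (simp add: set_integral_eq_integral_vanishing_outside)

lemma set_borel_measurable_affine:
  fixes f :: "'a \<Rightarrow> real"
  assumes "set_borel_measurable M U f" "U \<in> sets M"
  shows "set_borel_measurable M U (\<lambda>p. a + b * f p)"
proof -
  have "(\<lambda>p. indicator U p *\<^sub>R (a + b * f p)) = (\<lambda>p. a * indicator U p + b * (indicator U p *\<^sub>R f p))"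
    by (auto simp: indicator_def fun_eq_iff)
  moreover have "(\<lambda>p. a * indicator U p + b * (indicator U p *\<^sub>R f p)) \<in> borel_measurable M"
    using assms unfolding set_borel_measurable_def by measurable
  ultimately show ?thesis unfolding set_borel_measurable_def by simp
qed

lemma set_integrable_affine_square:
  fixes f :: "'a::euclidean_space \<Rightarrow> real"
  assumes K: "compact K" and f: "set_borel_measurable lborel K f" "set_integrable lborel K (\<lambda>p. (f p)\<^sup>2)"
  shows "set_integrable lborel K (\<lambda>p. (a + b * f p)\<^sup>2)"
proof (rule set_integrable_bound)
  show "set_integrable lborel K (\<lambda>p. 2 * a\<^sup>2 + 2 * b\<^sup>2 * (f p)\<^sup>2)"
  proof (rule set_integral_add)
    show "set_integrable lborel K (\<lambda>p. 2 * a\<^sup>2)"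
      using borel_integrable_compact[OF K continuous_on_const] unfolding set_integrable_def .
  qed (use f(2) in simp)
  have "set_borel_measurable lborel K (\<lambda>p. a + b * f p)"
    using set_borel_measurable_affine[OF f(1)] K by (simp add: compact_imp_closed)
  then show "set_borel_measurable lborel K (\<lambda>p. (a + b * f p)\<^sup>2)"
    unfolding set_borel_measurable_def
    by (rule borel_measurable_power[where n=2, THEN measurable_cong[THEN iffD1, rotated]])
       (auto simp: indicator_def power2_eq_square)
  have "(a + b * x)\<^sup>2 \<le> 2 * a\<^sup>2 + 2 * b\<^sup>2 * x\<^sup>2" for x
    using zero_le_power2[of "a - b * x"] unfolding power2_sum power2_diff power_mult_distrib
    by linarith
  then show "AE p in lborel. p \<in> K \<longrightarrow> norm ((a + b * f p)\<^sup>2) \<le> norm (2 * a\<^sup>2 + 2 * b\<^sup>2 * (f p)\<^sup>2)"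
    by simp
qed

section \<open>Weak solutions under restriction and affine maps\<close>

lemma weak_solI:
  fixes g :: "('n::finite) pt \<Rightarrow> real^'n"
  assumes "set_borel_measurable lborel U u"
    and "\<And>K. compact K \<Longrightarrow> K \<subseteq> U \<Longrightarrow> set_integrable lborel K (\<lambda>p. (u p)\<^sup>2)"
    and "\<And>i. set_borel_measurable lborel U (\<lambda>p. g p $ i)"
    and "\<And>K. compact K \<Longrightarrow> K \<subseteq> U \<Longrightarrow> set_integrable lborel K (\<lambda>p. (norm (g p))\<^sup>2)"
    and "\<And>\<psi> i. test_fun U \<psi> \<Longrightarrow>
           (LINT p:U|lborel. u p * dX \<psi> p i) = - (LINT p:U|lborel. g p $ i * \<psi> p)"
    and "\<And>\<psi>. test_fun U \<psi> \<Longrightarrow>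
           (LINT p:U|lborel. - u p * dT \<psi> p + (A p *v g p) \<bullet> gradX \<psi> p) = 0"
  shows "weak_sol A U u"
  unfolding weak_sol_def using assms by blast

lemma weak_solE:
  fixes u :: "('n::finite) pt \<Rightarrow> real"
  assumes "weak_sol A U u"
  obtains g :: "('n::finite) pt \<Rightarrow> real^'n"
  where "set_borel_measurable lborel U u"
    and "\<And>K. compact K \<Longrightarrow> K \<subseteq> U \<Longrightarrow> set_integrable lborel K (\<lambda>p. (u p)\<^sup>2)"
    and "\<And>i. set_borel_measurable lborel U (\<lambda>p. g p $ i)"
    and "\<And>K. compact K \<Longrightarrow> K \<subseteq> U \<Longrightarrow> set_integrable lborel K (\<lambda>p. (norm (g p))\<^sup>2)"
    and "\<And>\<psi> i. test_fun U \<psi> \<Longrightarrow>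
           (LINT p:U|lborel. u p * dX \<psi> p i) = - (LINT p:U|lborel. g p $ i * \<psi> p)"
    and "\<And>\<psi>. test_fun U \<psi> \<Longrightarrow>
           (LINT p:U|lborel. - u p * dT \<psi> p + (A p *v g p) \<bullet> gradX \<psi> p) = 0"
proof -
  from assms[unfolded weak_sol_def] show thesis
    by (elim conjE exE) (rule that; auto)
qed

lemma weak_sol_subset:
  assumes "weak_sol A U' u" "U \<subseteq> U'" "U \<in> sets lborel"
  shows "weak_sol A U u"
proof -
  obtain g where u_meas: "set_borel_measurable lborel U' u"
    and u_L2: "\<And>K. compact K \<Longrightarrow> K \<subseteq> U' \<Longrightarrow> set_integrable lborel K (\<lambda>p. (u p)\<^sup>2)"
    and g_meas: "\<And>i. set_borel_measurable lborel U' (\<lambda>p. g p $ i)"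
    and g_L2: "\<And>K. compact K \<Longrightarrow> K \<subseteq> U' \<Longrightarrow> set_integrable lborel K (\<lambda>p. (norm (g p))\<^sup>2)"
    and weak_grad: "\<And>\<psi> i. test_fun U' \<psi> \<Longrightarrow>
           (LINT p:U'|lborel. u p * dX \<psi> p i) = - (LINT p:U'|lborel. g p $ i * \<psi> p)"
    and weak_eq: "\<And>\<psi>. test_fun U' \<psi> \<Longrightarrow>
           (LINT p:U'|lborel. - u p * dT \<psi> p + (A p *v g p) \<bullet> gradX \<psi> p) = 0"
    by (rule weak_solE[OF assms(1)], rule that) assumption+
  have same_integral: "set_lebesgue_integral lborel U f = set_lebesgue_integral lborel U' f"
    if "\<And>p. p \<notin> U \<Longrightarrow> f p = 0" for f :: "_ \<Rightarrow> real"
  proof -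
    have "set_lebesgue_integral lborel U f = integral\<^sup>L lborel f"
      by (rule set_integral_eq_integral_vanishing_outside) (use that in blast)
    moreover have "set_lebesgue_integral lborel U' f = integral\<^sup>L lborel f"
      by (rule set_integral_eq_integral_vanishing_outside) (use that assms(2) in blast)
    ultimately show ?thesis by simp
  qed
  show ?thesis
  proof (rule weak_solI[where g = g])
    show "set_borel_measurable lborel U u" "set_borel_measurable lborel U (\<lambda>p. g p $ i)" for i
      using set_borel_measurable_subset[OF _ assms(3,2)] u_meas g_meas by blast+
    fix \<psi> assume \<psi>: "test_fun U \<psi>"
    note vanish = test_fun_vanishes_outside[OF \<psi>]
    have \<psi>': "test_fun U' \<psi>" using test_fun_subset[OF \<psi> assms(2)] .
    show "(LINT p:U|lborel. u p * dX \<psi> p i) = - (LINT p:U|lborel. g p $ i * \<psi> p)" for i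
      using weak_grad[OF \<psi>'] by (simp add: same_integral vanish)
    show "(LINT p:U|lborel. - u p * dT \<psi> p + (A p *v g p) \<bullet> gradX \<psi> p) = 0"
      using weak_eq[OF \<psi>'] by (simp add: same_integral vanish)
  qed (use assms(2) u_L2 g_L2 in auto)
qed

lemma weak_sol_affine:
  assumes "weak_sol A U u" "U \<in> sets lborel"
  shows "weak_sol A U (\<lambda>p. a + b * u p)"
proof -
  obtain g where u_meas: "set_borel_measurable lborel U u"
    and u_L2: "\<And>K. compact K \<Longrightarrow> K \<subseteq> U \<Longrightarrow> set_integrable lborel K (\<lambda>p. (u p)\<^sup>2)"
    and g_meas: "\<And>i. set_borel_measurable lborel U (\<lambda>p. g p $ i)"
    and g_L2: "\<And>K. compact K \<Longrightarrow> K \<subseteq> U \<Longrightarrow> set_integrable lborel K (\<lambda>p. (norm (g p))\<^sup>2)"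
    and weak_grad: "\<And>\<psi> i. test_fun U \<psi> \<Longrightarrow>
           (LINT p:U|lborel. u p * dX \<psi> p i) = - (LINT p:U|lborel. g p $ i * \<psi> p)"
    and weak_eq: "\<And>\<psi>. test_fun U \<psi> \<Longrightarrow>
           (LINT p:U|lborel. - u p * dT \<psi> p + (A p *v g p) \<bullet> gradX \<psi> p) = 0"
    by (rule weak_solE[OF assms(1)], rule that) assumption+
  show ?thesis
  proof (rule weak_solI[where g = "\<lambda>p. b *\<^sub>R g p"])
    show "set_borel_measurable lborel U (\<lambda>p. a + b * u p)"
      by (rule set_borel_measurable_affine[OF u_meas assms(2)])
    show "set_borel_measurable lborel U (\<lambda>p. (b *\<^sub>R g p) $ i)" for i
      using set_borel_measurable_affine[OF g_meas[of i] assms(2), of 0 b] by simp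
    fix K assume K: "compact K" "K \<subseteq> U"
    have "set_borel_measurable lborel K u"
      using set_borel_measurable_subset[OF u_meas _ K(2)] K(1) by (simp add: compact_imp_closed)
    then show "set_integrable lborel K (\<lambda>p. (a + b * u p)\<^sup>2)"
      using set_integrable_affine_square K(1) u_L2[OF K] by blast
    show "set_integrable lborel K (\<lambda>p. (norm (b *\<^sub>R g p))\<^sup>2)"
      using u_L2 g_L2[OF K] by (simp add: power_mult_distrib)
  next
    fix \<psi> assume \<psi>: "test_fun U \<psi>"
    note vanish = test_fun_vanishes_outside[OF \<psi>]
    note derivatives = test_fun_integral_derivatives[OF \<psi>]
    have "(LINT p:U|lborel. (a + b * u p) * dX \<psi> p i)
        = (LINT p:U|lborel. a * dX \<psi> p i + b * (u p * dX \<psi> p i))" for i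
      by (simp add: algebra_simps)
    also have "\<dots> i = b * (LINT p:U|lborel. u p * dX \<psi> p i)" for i
      by (rule set_integral_add_mult_of_integral_eq_0) (use derivatives(1,2) vanish in auto)
    finally show "(LINT p:U|lborel. (a + b * u p) * dX \<psi> p i)
        = - (LINT p:U|lborel. (b *\<^sub>R g p) $ i * \<psi> p)" for i
      using weak_grad[OF \<psi>] by (simp add: mult.assoc)
    have "(LINT p:U|lborel. - (a + b * u p) * dT \<psi> p + (A p *v (b *\<^sub>R g p)) \<bullet> gradX \<psi> p)
        = (LINT p:U|lborel. - a * dT \<psi> p + b * (- u p * dT \<psi> p + (A p *v g p) \<bullet> gradX \<psi> p))"
      by (simp add: algebra_simps matrix_vector_mult_scaleR)
    also have "\<dots> = b * (LINT p:U|lborel. - u p * dT \<psi> p + (A p *v g p) \<bullet> gradX \<psi> p)"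
      by (rule set_integral_add_mult_of_integral_eq_0) (use derivatives(3,4) vanish in auto)
    finally show "(LINT p:U|lborel. - (a + b * u p) * dT \<psi> p + (A p *v (b *\<^sub>R g p)) \<bullet> gradX \<psi> p) = 0"
      using weak_eq[OF \<psi>] by simp
  qed
qed

section \<open>Parabolic cylinders and the distance to the boundary\<close>

lemma pdist_commute: "pdist p q = pdist q p"
  unfolding pdist_def by (simp add: norm_minus_commute abs_minus_commute)

lemma pdist_nonneg: "0 \<le> pdist p q"
  unfolding pdist_def by (simp add: le_max_iff_disj)

lemma pdist_triangle: "pdist p r \<le> pdist p q + pdist q r"
proof -
  have "sqrt \<bar>snd p - snd r\<bar> \<le> sqrt \<bar>snd p - snd q\<bar> + sqrt \<bar>snd q - snd r\<bar>"
  proof -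
    have "sqrt \<bar>snd p - snd r\<bar> \<le> sqrt (\<bar>snd p - snd q\<bar> + \<bar>snd q - snd r\<bar>)"
      by simp
    also have "\<dots> \<le> sqrt \<bar>snd p - snd q\<bar> + sqrt \<bar>snd q - snd r\<bar>"
      by (rule sqrt_add_le_add_sqrt) auto
    finally show ?thesis .
  qed
  moreover have "norm (fst p - fst r) \<le> norm (fst p - fst q) + norm (fst q - fst r)"
    using norm_triangle_ineq[of "fst p - fst q" "fst q - fst r"] by simp
  moreover have "norm (fst p - fst q) \<le> pdist p q" "sqrt \<bar>snd p - snd q\<bar> \<le> pdist p q"
    "norm (fst q - fst r) \<le> pdist q r" "sqrt \<bar>snd q - snd r\<bar> \<le> pdist q r"
    unfolding pdist_def by auto
  ultimately show ?thesis
    unfolding pdist_def[of p r] by simp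
qed

lemma mem_pcyl [simp]: "y \<in> pcyl r x \<longleftrightarrow> pdist x y < r"
  unfolding pcyl_def by simp

lemma open_pcyl: "open (pcyl r x)"
proof -
  have "continuous_on UNIV (pdist x)"
    unfolding pdist_def by (intro continuous_intros)
  then show ?thesis
    unfolding pcyl_def by (intro open_Collect_less continuous_intros) auto
qed

lemma pcyl_mono: "r \<le> s \<Longrightarrow> pcyl r x \<subseteq> pcyl s x"
  by auto

lemma pcyl_subset_ball:
  assumes "r \<le> 1"
  shows "pcyl r x \<subseteq> ball x (2 * r)"
proof
  fix y assume "y \<in> pcyl r x"
  then have space: "norm (fst x - fst y) < r" and time: "sqrt \<bar>snd x - snd y\<bar> < r"
    by (auto simp: pdist_def)
  have "(sqrt \<bar>snd x - snd y\<bar>)\<^sup>2 < r\<^sup>2"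
    using time by (intro power_strict_mono) auto
  then have "\<bar>snd x - snd y\<bar> < r\<^sup>2" by simp
  also have "r\<^sup>2 \<le> r"
  proof -
    have "0 < r" using time real_sqrt_ge_zero[of "\<bar>snd x - snd y\<bar>"] by linarith
    then show ?thesis using assms by (simp add: power2_eq_square mult_left_le_one_le)
  qed
  finally have "dist x y < norm (fst x - fst y) + r"
    using norm_Pair_le[of "fst x - fst y" "snd x - snd y"]
    by (cases x, cases y) (simp add: dist_norm)
  then show "y \<in> ball x (2 * r)" using space by simp
qed

lemma open_contains_pcyl:
  assumes "open S" "x \<in> S"
  obtains r where "r > 0" "pcyl r x \<subseteq> S"
proof -
  obtain e where "e > 0" "ball x e \<subseteq> S"
    using assms open_contains_ball by blast
  moreover have "pcyl (min (e / 2) 1) x \<subseteq> ball x e"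
    using pcyl_subset_ball[of "min (e / 2) 1" x] by (auto simp: subset_eq)
  ultimately show ?thesis
    using that[of "min (e / 2) 1"] by auto
qed

lemma ess_bdry_subset_frontier: "ess_bdry \<Omega> \<subseteq> frontier \<Omega>"
  unfolding ess_bdry_def par_bdry_def ssing_bdry_def abn_bdry_def by blast

lemma ess_bdry_disjoint_open: "open \<Omega> \<Longrightarrow> ess_bdry \<Omega> \<inter> \<Omega> = {}"
  using ess_bdry_subset_frontier[of \<Omega>] by (auto simp: frontier_def interior_open)

lemma pdelta_le_pdist: "z \<in> ess_bdry \<Omega> \<Longrightarrow> pdelta \<Omega> y \<le> pdist y z"
  unfolding pdelta_def by (rule cInf_lower) (blast, auto intro: bdd_belowI[of _ 0] simp: pdist_nonneg)

lemma pdelta_approx: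
  assumes "ess_bdry \<Omega> \<noteq> {}" "e > 0"
  obtains z where "z \<in> ess_bdry \<Omega>" "pdist y z < pdelta \<Omega> y + e"
proof -
  have "Inf {pdist y z | z. z \<in> ess_bdry \<Omega>} < pdelta \<Omega> y + e"
    using assms(2) unfolding pdelta_def by simp
  then show ?thesis
    using cInf_lessD[of "{pdist y z | z. z \<in> ess_bdry \<Omega>}"] assms(1) that by blast
qed

lemma pdelta_pos:
  assumes "open \<Omega>" "y \<in> \<Omega>" "ess_bdry \<Omega> \<noteq> {}"
  shows "pdelta \<Omega> y > 0"
proof -
  obtain r where r: "r > 0" "pcyl r y \<subseteq> \<Omega>"
    using open_contains_pcyl[OF assms(1,2)] .
  have "r \<le> pdist y z" if "z \<in> ess_bdry \<Omega>" for z
    using r(2) that ess_bdry_disjoint_open[OF assms(1)] by (force simp: not_less)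
  then have "r \<le> pdelta \<Omega> y"
    unfolding pdelta_def using assms(3) by (intro cInf_greatest) auto
  then show ?thesis using r(1) by simp
qed

section \<open>Hoelder decay at the boundary\<close>

definition nonneg_bdry_sol ::
  "(('n::finite) pt \<Rightarrow> real^'n^'n) \<Rightarrow> 'n pt set \<Rightarrow> 'n pt set \<Rightarrow> real \<Rightarrow> ('n pt \<Rightarrow> real) \<Rightarrow> bool"
  where "nonneg_bdry_sol A \<Omega> Q c u \<longleftrightarrow>
    (\<forall>Y \<in> Q \<inter> \<Omega>. u Y \<ge> 0) \<and> weak_sol A (Q \<inter> \<Omega>) u \<and> continuous_on (Q \<inter> \<Omega>) u \<and>
    (\<forall>z \<in> Q \<inter> ess_bdry \<Omega>. (u \<longlongrightarrow> c) (at z within (Q \<inter> \<Omega>)))"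

definition boundary_barrier_condition ::
  "(('n::finite) pt \<Rightarrow> real^'n^'n) \<Rightarrow> 'n pt set \<Rightarrow> 'n pt set \<Rightarrow> real \<Rightarrow> real \<Rightarrow> bool"
  where "boundary_barrier_condition A \<Omega> Q \<gamma> \<eta> \<longleftrightarrow>
    (\<forall>x r. x \<in> ess_bdry \<Omega> \<and> r > 0 \<and> pcyl r x \<subseteq> Q \<longrightarrow>
       (\<forall>v. nonneg_bdry_sol A \<Omega> (pcyl r x) 1 v \<longrightarrow> (\<forall>Y \<in> pcyl (\<gamma> * r) x \<inter> \<Omega>. v Y \<ge> \<eta>)))"

lemma boundary_barrier_conditionD:
  assumes "boundary_barrier_condition A \<Omega> Q \<gamma> \<eta>" "x \<in> ess_bdry \<Omega>" "r > 0" "pcyl r x \<subseteq> Q"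
    and "nonneg_bdry_sol A \<Omega> (pcyl r x) 1 v" "Y \<in> pcyl (\<gamma> * r) x \<inter> \<Omega>"
  shows "\<eta> \<le> v Y"
  using assms(1)[unfolded boundary_barrier_condition_def, rule_format, of x r v Y] assms(2-6)
  by blast

lemma boundary_barrier_condition_mono:
  assumes "boundary_barrier_condition A \<Omega> Q \<gamma> \<eta>" "\<gamma>' \<le> \<gamma>" "\<eta>' \<le> \<eta>"
  shows "boundary_barrier_condition A \<Omega> Q \<gamma>' \<eta>'"
  unfolding boundary_barrier_condition_def
proof (intro allI impI ballI)
  fix x r v Y
  assume x: "x \<in> ess_bdry \<Omega> \<and> r > 0 \<and> pcyl r x \<subseteq> Q"
    and v: "nonneg_bdry_sol A \<Omega> (pcyl r x) 1 v" and Y: "Y \<in> pcyl (\<gamma>' * r) x \<inter> \<Omega>"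
  have "\<gamma>' * r \<le> \<gamma> * r" using x assms(2) by (simp add: mult_right_mono)
  then have "Y \<in> pcyl (\<gamma> * r) x \<inter> \<Omega>" using Y by auto
  then have "\<eta> \<le> v Y"
    using x by (intro boundary_barrier_conditionD[OF assms(1) _ _ _ v]) auto
  then show "\<eta>' \<le> v Y" using assms(3) by linarith
qed

lemma nonneg_bdry_sol_subset:
  assumes "nonneg_bdry_sol A \<Omega> Q c u" "Q' \<subseteq> Q" "open Q'" "open \<Omega>"
  shows "nonneg_bdry_sol A \<Omega> Q' c u"
proof -
  have sub: "Q' \<inter> \<Omega> \<subseteq> Q \<inter> \<Omega>" using assms(2) by blast
  have "weak_sol A (Q \<inter> \<Omega>) u" using assms(1) by (simp add: nonneg_bdry_sol_def)
  then have "weak_sol A (Q' \<inter> \<Omega>) u"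
    by (rule weak_sol_subset[OF _ sub]) (use assms(3,4) in auto)
  moreover have "continuous_on (Q' \<inter> \<Omega>) u"
    using assms(1) sub unfolding nonneg_bdry_sol_def by (auto intro: continuous_on_subset)
  moreover have "(u \<longlongrightarrow> c) (at z within Q' \<inter> \<Omega>)" if "z \<in> Q' \<inter> ess_bdry \<Omega>" for z
  proof -
    have "(u \<longlongrightarrow> c) (at z within Q \<inter> \<Omega>)"
      using assms(1,2) that unfolding nonneg_bdry_sol_def by blast
    then show ?thesis by (rule tendsto_within_subset[OF _ sub])
  qed
  ultimately show ?thesis
    using assms(1) sub unfolding nonneg_bdry_sol_def by auto
qed

lemma nonneg_bdry_sol_one_minus:
  assumes u: "nonneg_bdry_sol A \<Omega> Q 0 u" and m: "m > 0" and bound: "\<forall>Y \<in> Q \<inter> \<Omega>. u Y \<le> m"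
    and "open Q" "open \<Omega>"
  shows "nonneg_bdry_sol A \<Omega> Q 1 (\<lambda>p. 1 - u p / m)"
  unfolding nonneg_bdry_sol_def
proof (intro conjI ballI)
  show "0 \<le> 1 - u Y / m" if "Y \<in> Q \<inter> \<Omega>" for Y
    using bound that m by simp
  have "weak_sol A (Q \<inter> \<Omega>) (\<lambda>p. 1 + (- 1 / m) * u p)"
    using u assms(4,5) by (intro weak_sol_affine) (auto simp: nonneg_bdry_sol_def)
  then show "weak_sol A (Q \<inter> \<Omega>) (\<lambda>p. 1 - u p / m)" by simp
  show "continuous_on (Q \<inter> \<Omega>) (\<lambda>p. 1 - u p / m)"
    using u m unfolding nonneg_bdry_sol_def by (intro continuous_intros) auto
  show "((\<lambda>p. 1 - u p / m) \<longlongrightarrow> 1) (at z within Q \<inter> \<Omega>)" if "z \<in> Q \<inter> ess_bdry \<Omega>" for z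
  proof -
    have "(u \<longlongrightarrow> 0) (at z within Q \<inter> \<Omega>)"
      using u that unfolding nonneg_bdry_sol_def by blast
    then have "((\<lambda>p. 1 - u p / m) \<longlongrightarrow> 1 - 0 / m) (at z within Q \<inter> \<Omega>)"
      using m by (intro tendsto_intros) auto
    then show ?thesis by simp
  qed
qed

lemma barrier_decay_step:
  assumes barrier: "boundary_barrier_condition A \<Omega> Q \<gamma> \<eta>" and \<Omega>: "open \<Omega>"
    and x: "x \<in> ess_bdry \<Omega>" "r > 0" "pcyl r x \<subseteq> Q"
    and u: "nonneg_bdry_sol A \<Omega> Q 0 u" and m: "m > 0"
    and bound: "\<forall>Y \<in> pcyl r x \<inter> \<Omega>. u Y \<le> m"
  shows "\<forall>Y \<in> pcyl (\<gamma> * r) x \<inter> \<Omega>. u Y \<le> (1 - \<eta>) * m"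
proof
  fix Y assume Y: "Y \<in> pcyl (\<gamma> * r) x \<inter> \<Omega>"
  have "nonneg_bdry_sol A \<Omega> (pcyl r x) 0 u"
    by (rule nonneg_bdry_sol_subset[OF u x(3) open_pcyl \<Omega>])
  then have "nonneg_bdry_sol A \<Omega> (pcyl r x) 1 (\<lambda>p. 1 - u p / m)"
    by (rule nonneg_bdry_sol_one_minus[OF _ m bound open_pcyl \<Omega>])
  then have "\<eta> \<le> 1 - u Y / m"
    by (rule boundary_barrier_conditionD[OF barrier x _ Y])
  then have "u Y / m \<le> 1 - \<eta>" by linarith
  then show "u Y \<le> (1 - \<eta>) * m"
    using m by (simp add: divide_le_eq)
qed

lemma barrier_decay_iterate:
  assumes barrier: "boundary_barrier_condition A \<Omega> Q \<gamma> \<eta>" and \<Omega>: "open \<Omega>"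
    and x: "x \<in> ess_bdry \<Omega>" "r > 0" "pcyl r x \<subseteq> Q"
    and u: "nonneg_bdry_sol A \<Omega> Q 0 u" and \<gamma>: "0 < \<gamma>" "\<gamma> \<le> 1" and \<eta>: "\<eta> < 1" and m: "m > 0"
    and bound: "\<forall>Y \<in> pcyl r x \<inter> \<Omega>. u Y \<le> m"
  shows "\<forall>Y \<in> pcyl (\<gamma> ^ k * r) x \<inter> \<Omega>. u Y \<le> (1 - \<eta>) ^ k * m"
proof (induction k)
  case 0
  then show ?case using bound by simp
next
  case (Suc k)
  have "\<gamma> ^ k * r \<le> r" using \<gamma> x(2) by (simp add: power_le_one mult_left_le_one_le)
  then have "pcyl (\<gamma> ^ k * r) x \<subseteq> Q" using pcyl_mono x(3) by blast
  from barrier_decay_step[OF barrier \<Omega> x(1) _ this u _ Suc.IH]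
  show ?case using \<gamma> x(2) \<eta> m by (simp add: mult.assoc)
qed

lemma ex_power_bracket:
  fixes \<gamma> \<rho> R :: real
  assumes "0 < \<gamma>" "\<gamma> < 1" "0 < \<rho>" "\<rho> \<le> R"
  obtains k where "\<gamma> ^ Suc k * R < \<rho>" "\<rho> \<le> \<gamma> ^ k * R"
proof -
  obtain n where n: "\<gamma> ^ n < \<rho> / R"
    using real_arch_pow_inv[of "\<rho> / R" \<gamma>] assms by auto
  have "\<rho> \<le> \<gamma> ^ k * R" if step: "\<And>k. \<rho> \<le> \<gamma> ^ k * R \<Longrightarrow> \<rho> \<le> \<gamma> ^ Suc k * R" for k
    using assms(4) step by (induction k) auto
  moreover have "\<gamma> ^ n * R < \<rho>"
    using n assms by (simp add: pos_less_divide_eq)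
  ultimately show ?thesis
    using that by (meson not_le)
qed

definition boundary_holder_exponent :: "real \<Rightarrow> real \<Rightarrow> real"
  where "boundary_holder_exponent \<gamma> \<eta> = ln (1 - \<eta>) / ln \<gamma>"

lemma boundary_holder_exponent:
  assumes "0 < \<gamma>" "\<gamma> < 1" "0 < \<eta>" "\<eta> < 1"
  shows boundary_holder_exponent_pos: "0 < boundary_holder_exponent \<gamma> \<eta>"
    and powr_boundary_holder_exponent: "\<gamma> powr boundary_holder_exponent \<gamma> \<eta> = 1 - \<eta>"
  using assms by (simp_all add: boundary_holder_exponent_def divide_neg_neg powr_def)

lemma boundary_holder_decay:
  assumes barrier: "boundary_barrier_condition A \<Omega> Q \<gamma> \<eta>" and \<Omega>: "open \<Omega>"
    and z: "z \<in> ess_bdry \<Omega>" "R > 0" "pcyl R z \<subseteq> Q"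
    and u: "nonneg_bdry_sol A \<Omega> Q 0 u" and \<gamma>: "0 < \<gamma>" "\<gamma> < 1" and \<eta>: "0 < \<eta>" "\<eta> < 1"
    and m: "m > 0" and bound: "\<forall>Y \<in> Q \<inter> \<Omega>. u Y \<le> m"
    and Y: "Y \<in> Q \<inter> \<Omega>" "pdist z Y < \<rho>"
  shows "u Y \<le> (\<rho> / (\<gamma> * R)) powr boundary_holder_exponent \<gamma> \<eta> * m"
proof -
  let ?\<alpha> = "boundary_holder_exponent \<gamma> \<eta>"
  have \<alpha>: "0 < ?\<alpha>" "\<gamma> powr ?\<alpha> = 1 - \<eta>"
    using boundary_holder_exponent[OF \<gamma> \<eta>] by auto
  show ?thesis
  proof (cases "R \<le> \<rho>")
    case True
    then have "\<gamma> * R \<le> \<rho>" using mult_left_le_one_le[of R \<gamma>] \<gamma> z(2) by linarith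
    then have "1 \<le> \<rho> / (\<gamma> * R)"
      using \<gamma> z(2) by (simp add: le_divide_eq)
    then have "1 \<le> (\<rho> / (\<gamma> * R)) powr ?\<alpha>"
      using \<alpha>(1) by (simp add: ge_one_powr_ge_zero)
    then have "m \<le> (\<rho> / (\<gamma> * R)) powr ?\<alpha> * m"
      using mult_right_mono[of 1 _ m] m by simp
    moreover have "u Y \<le> m" using bound Y(1) by blast
    ultimately show ?thesis by linarith
  next
    case False
    have "0 < \<rho>" using Y(2) pdist_nonneg[of z Y] by linarith
    moreover have "\<rho> \<le> R" using False by simp
    ultimately obtain k where k: "\<gamma> ^ Suc k * R < \<rho>" "\<rho> \<le> \<gamma> ^ k * R"
      using ex_power_bracket[OF \<gamma>] by blast
    have "Y \<in> pcyl (\<gamma> ^ k * R) z \<inter> \<Omega>" using Y k by auto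
    moreover have "\<forall>Y \<in> pcyl R z \<inter> \<Omega>. u Y \<le> m" using bound z(3) by blast
    ultimately have "u Y \<le> (1 - \<eta>) ^ k * m"
      using barrier_decay_iterate[OF barrier \<Omega> z u \<gamma>(1) _ \<eta>(2) m] \<gamma>(2) by auto
    also have "(1 - \<eta>) ^ k = (\<gamma> ^ k) powr ?\<alpha>"
      using \<alpha>(2) \<gamma>(1) by (simp add: powr_powr powr_realpow[symmetric] mult.commute flip: powr_power)
    also have "\<dots> \<le> (\<rho> / (\<gamma> * R)) powr ?\<alpha>"
      using k(1) \<gamma>(1) z(2) \<alpha>(1) by (intro powr_mono2) (auto simp: field_simps)
    finally show ?thesis using m by simp
  qed
qed

lemma ereal_le_mult_SUP_of_real_bounds:
  fixes u :: "'a \<Rightarrow> real"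
  assumes "Y \<in> S" "0 \<le> u Y" "c > 0"
    and bounds: "\<And>m. m > 0 \<Longrightarrow> \<forall>Z \<in> S. u Z \<le> m \<Longrightarrow> u Y \<le> c * m"
  shows "ereal (u Y) \<le> ereal c * (SUP Z \<in> S. ereal (u Z))"
proof (cases "(SUP Z \<in> S. ereal (u Z)) = \<infinity>")
  case True
  then show ?thesis using assms(3) by simp
next
  case False
  have "ereal (u Y) \<le> (SUP Z \<in> S. ereal (u Z))" using assms(1) by (rule SUP_upper)
  with False obtain M where M: "(SUP Z \<in> S. ereal (u Z)) = ereal M"
    by (cases "SUP Z \<in> S. ereal (u Z)") auto
  have le_M: "u Z \<le> M" if "Z \<in> S" for Z
    using SUP_upper[OF that, of "\<lambda>Z. ereal (u Z)"] M by simp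
  have "u Y \<le> c * M + e" if "e > 0" for e
  proof -
    have "0 < e / c" using that assms(3) by simp
    moreover have "0 \<le> M" using le_M assms(1,2) by force
    ultimately have "0 < M + e / c" "\<forall>Z \<in> S. u Z \<le> M + e / c"
      using le_M by (auto intro: add_increasing2 less_imp_le)
    then have "u Y \<le> c * (M + e / c)" by (rule bounds)
    then show ?thesis using assms(3) by (simp add: distrib_left)
  qed
  then have "u Y \<le> c * M" by (rule field_le_epsilon)
  then show ?thesis using M by simp
qed

lemma ess_bdry_point_near:
  assumes "open \<Omega>" "x0 \<in> ess_bdry \<Omega>" "Y \<in> pcyl R x0 \<inter> \<Omega>"
  obtains z where "z \<in> ess_bdry \<Omega>" "pdist z Y < 2 * pdelta \<Omega> Y" "pcyl R z \<subseteq> pcyl (3 * R) x0"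
proof -
  let ?d = "pdelta \<Omega> Y"
  have d_pos: "0 < ?d" using pdelta_pos[OF assms(1)] assms(2,3) by blast
  have d_le: "?d \<le> pdist Y x0" using pdelta_le_pdist[OF assms(2)] .
  have Y_x0: "pdist x0 Y < R" using assms(3) by simp
  obtain z where z: "z \<in> ess_bdry \<Omega>" "pdist Y z < ?d + min ?d (R - pdist x0 Y)"
    using pdelta_approx[of \<Omega> "min ?d (R - pdist x0 Y)" Y] assms(2) d_pos Y_x0 by auto
  have "pcyl R z \<subseteq> pcyl (3 * R) x0"
  proof
    fix q assume "q \<in> pcyl R z"
    then have "pdist z q < R" by simp
    moreover have "pdist x0 q \<le> pdist x0 Y + pdist Y z + pdist z q"
      using pdist_triangle[of x0 q Y] pdist_triangle[of Y q z] by simp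
    ultimately show "q \<in> pcyl (3 * R) x0"
      using z(2) d_le Y_x0 pdist_commute[of Y x0] by simp
  qed
  then show ?thesis
    using that z pdist_commute[of Y z] by simp
qed

lemma boundary_holder_estimate:
  assumes barrier: "boundary_barrier_condition A \<Omega> (pcyl (3 * R) x0) \<gamma> \<eta>"
    and \<Omega>: "open \<Omega>" and x0: "x0 \<in> ess_bdry \<Omega>" and R: "R > 0"
    and u: "nonneg_bdry_sol A \<Omega> (pcyl (3 * R) x0) 0 u"
    and \<gamma>: "0 < \<gamma>" "\<gamma> < 1" and \<eta>: "0 < \<eta>" "\<eta> < 1"
    and Y: "Y \<in> pcyl R x0 \<inter> \<Omega>"
  defines "\<alpha> \<equiv> boundary_holder_exponent \<gamma> \<eta>"
  shows "ereal (u Y) \<le> ereal ((2 / \<gamma>) powr \<alpha> * (pdelta \<Omega> Y / R) powr \<alpha>) *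
           (SUP Z \<in> pcyl (3 * R) x0 \<inter> \<Omega>. ereal (u Z))"
proof (rule ereal_le_mult_SUP_of_real_bounds)
  obtain z where z: "z \<in> ess_bdry \<Omega>" "pdist z Y < 2 * pdelta \<Omega> Y" "pcyl R z \<subseteq> pcyl (3 * R) x0"
    using ess_bdry_point_near[OF \<Omega> x0 Y] .
  have "pcyl R x0 \<subseteq> pcyl (3 * R) x0" using R by (intro pcyl_mono) simp
  then show Y': "Y \<in> pcyl (3 * R) x0 \<inter> \<Omega>" using Y by blast
  then show "0 \<le> u Y" using u unfolding nonneg_bdry_sol_def by blast
  have d_pos: "0 < pdelta \<Omega> Y" using pdelta_pos[OF \<Omega>] x0 Y by blast
  then show "0 < (2 / \<gamma>) powr \<alpha> * (pdelta \<Omega> Y / R) powr \<alpha>"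
    using \<gamma> R by simp
  fix m assume "m > 0" "\<forall>Z \<in> pcyl (3 * R) x0 \<inter> \<Omega>. u Z \<le> m"
  then have "u Y \<le> (2 * pdelta \<Omega> Y / (\<gamma> * R)) powr \<alpha> * m"
    unfolding \<alpha>_def using boundary_holder_decay[OF barrier \<Omega> z(1) R z(3) u \<gamma> \<eta>] Y' z(2) by blast
  moreover have "(2 * pdelta \<Omega> Y / (\<gamma> * R)) powr \<alpha> = (2 / \<gamma>) powr \<alpha> * (pdelta \<Omega> Y / R) powr \<alpha>"
    using \<gamma> R d_pos by (simp add: powr_mult[symmetric])
  ultimately show "u Y \<le> (2 / \<gamma>) powr \<alpha> * (pdelta \<Omega> Y / R) powr \<alpha> * m"
    by simp
qed

theorem lemma4p3:
  fixes \<eta> \<gamma> :: real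
  assumes "\<eta> > 0" and "\<gamma> > 0"
  shows "\<exists>C>0. \<exists>\<alpha>>0. \<forall>(lam::real) (A :: ('n::finite) pt \<Rightarrow> real^('n::finite)^'n) (\<Omega> :: ('n::finite) pt set) x0 R.
    coeff_ok lam A \<and> open \<Omega> \<and> x0 \<in> ess_bdry \<Omega> \<and> R > 0 \<and>
    (\<forall>x r. x \<in> ess_bdry \<Omega> \<and> r > 0 \<and> pcyl r x \<subseteq> pcyl (3 * R) x0 \<longrightarrow>
       (\<forall>v. (\<forall>Y \<in> pcyl r x \<inter> \<Omega>. v Y \<ge> 0) \<and>
            weak_sol A (pcyl r x \<inter> \<Omega>) v \<and>
            continuous_on (pcyl r x \<inter> \<Omega>) v \<and>
            (\<forall>z \<in> pcyl r x \<inter> ess_bdry \<Omega>. (v \<longlongrightarrow> 1) (at z within (pcyl r x \<inter> \<Omega>)))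
          \<longrightarrow> (\<forall>Y \<in> pcyl (\<gamma> * r) x \<inter> \<Omega>. v Y \<ge> \<eta>)))
    \<longrightarrow>
    (\<forall>u. (\<forall>Y \<in> pcyl (3 * R) x0 \<inter> \<Omega>. u Y \<ge> 0) \<and>
         weak_sol A (pcyl (3 * R) x0 \<inter> \<Omega>) u \<and>
         continuous_on (pcyl (3 * R) x0 \<inter> \<Omega>) u \<and>
         (\<forall>z \<in> pcyl (3 * R) x0 \<inter> ess_bdry \<Omega>.
             (u \<longlongrightarrow> 0) (at z within (pcyl (3 * R) x0 \<inter> \<Omega>)))
       \<longrightarrow> (\<forall>Y \<in> pcyl R x0 \<inter> \<Omega>.
             ereal (u Y) \<le> ereal (C * (pdelta \<Omega> Y / R) powr \<alpha>) *
                            (SUP Z \<in> pcyl (3 * R) x0 \<inter> \<Omega>. ereal (u Z))))"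
proof -
  define \<gamma>' where "\<gamma>' = min \<gamma> (1 / 2)"
  define \<eta>' where "\<eta>' = min \<eta> (1 / 2)"
  define \<alpha> where "\<alpha> = boundary_holder_exponent \<gamma>' \<eta>'"
  have \<gamma>': "0 < \<gamma>'" "\<gamma>' < 1" "\<gamma>' \<le> \<gamma>" and \<eta>': "0 < \<eta>'" "\<eta>' < 1" "\<eta>' \<le> \<eta>"
    using assms unfolding \<gamma>'_def \<eta>'_def by auto
  have "0 < (2 / \<gamma>') powr \<alpha>" "0 < \<alpha>"
    using \<gamma>' \<eta>' boundary_holder_exponent_pos unfolding \<alpha>_def by auto
  moreover have "ereal (u Y) \<le> ereal ((2 / \<gamma>') powr \<alpha> * (pdelta \<Omega> Y / R) powr \<alpha>) *
                   (SUP Z \<in> pcyl (3 * R) x0 \<inter> \<Omega>. ereal (u Z))"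
    if "open \<Omega>" "x0 \<in> ess_bdry \<Omega>" "R > 0"
      and "boundary_barrier_condition A \<Omega> (pcyl (3 * R) x0) \<gamma> \<eta>"
      and "nonneg_bdry_sol A \<Omega> (pcyl (3 * R) x0) 0 u" "Y \<in> pcyl R x0 \<inter> \<Omega>"
    for A :: "('n::finite) pt \<Rightarrow> real^'n^'n" and \<Omega> x0 R u Y
    using boundary_holder_estimate[OF boundary_barrier_condition_mono[OF that(4) \<gamma>'(3) \<eta>'(3)]
        that(1-3,5) \<gamma>'(1,2) \<eta>'(1,2) that(6)]
    unfolding \<alpha>_def .
  ultimately show ?thesis
    unfolding nonneg_bdry_sol_def[symmetric] boundary_barrier_condition_def[symmetric]
    by blast
qed

end
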